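(* Suppose $\beta\ge\bar\beta$. Then for every $X\in\overline\Omega_{1/6}$, $$\|\nabla h(X)\|_F\ge\frac12\big\|\mathrm{grad} f(\mathcal{P}_{\mathcal{S}_{n,p}}(X))\big\|_F+\frac\beta4\|X^\top X-I_p\|_F .$$
   Context: $f:\mathbb{R}^{n\times p}\to\mathbb{R}$ ($n\ge p$) is differentiable with $f,\nabla f$ locally Lipschitz. $\Phi(M):=\frac12(M+M^\top)$. For $Y\in\mathcal{S}_{n,p}=\{Y:Y^\top Y=I_p\}$, $\mathrm{grad} f(Y):=\nabla f(Y)-Y\Phi(Y^\top\nabla f(Y))$. $\mathcal{A}(X):=\frac32I_p-\frac12X^\top X$, $g(X):=f(X\mathcal{A}(X))$, $h(X):=g(X)+\frac\beta4\|X^\top X-I_p\|_F^2$, $G(X):=\nabla f(Y)|_{Y=X\mathcal{A}(X)}$. $\overline\Omega_r:=\{X:\|X^\top X-I_p\|_F\le r\}$; $\Omega:=\{X:\|X\|_2\le1+\frac1{12}\}$; $M_1:=\sup_{X\in\Omega}\|G(X)\|_F$; $M_2:=\sup_{X\ne Y\in\Omega}\frac{\|\nabla g(X)-\nabla g(Y)\|_F}{\|X-Y\|_F}$; $\bar\beta:=\max\{12M_1,6M_2\}$. For full-column-rank $X$ with economic SVD $X=U\Sigma V^\top$, $\mathcal{P}_{\mathcal{S}_{n,p}}(X):=UV^\top$. *)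

theory Defs
  imports "HOL-Analysis.Analysis"
begin

text \<open>Matrices in R^{n x p} are represented as real^'p^'n (rows indexed by 'n, columns by 'p).
  The built-in norm / inner product on this type are the Frobenius norm / inner product.\<close>

definition egrad :: "(real^'p^'n \<Rightarrow> real) \<Rightarrow> real^'p^'n \<Rightarrow> real^'p^'n" where
  "egrad \<phi> X = (THE G. (\<phi> has_derivative (\<lambda>H. G \<bullet> H)) (at X))"

definition loc_lipschitz :: "('a::metric_space \<Rightarrow> 'b::metric_space) \<Rightarrow> bool" where
  "loc_lipschitz g \<longleftrightarrow> (\<forall>x. \<exists>e>0. \<exists>L. \<forall>y\<in>ball x e. \<forall>z\<in>ball x e. dist (g y) (g z) \<le> L * dist y z)"

definition symPart :: "real^'p^'p \<Rightarrow> real^'p^'p" where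
  "symPart M = (1/2) *\<^sub>R (M + transpose M)"

definition rgrad :: "(real^'p^'n \<Rightarrow> real) \<Rightarrow> real^'p^'n \<Rightarrow> real^'p^'n" where
  "rgrad f Y = egrad f Y - Y ** symPart (transpose Y ** egrad f Y)"

definition Amap :: "real^'p^'n \<Rightarrow> real^'p^'p" where
  "Amap X = (3/2) *\<^sub>R mat 1 - (1/2) *\<^sub>R (transpose X ** X)"

definition gfun :: "(real^'p^'n \<Rightarrow> real) \<Rightarrow> real^'p^'n \<Rightarrow> real" where
  "gfun f X = f (X ** Amap X)"

definition hfun :: "(real^'p^'n \<Rightarrow> real) \<Rightarrow> real \<Rightarrow> real^'p^'n \<Rightarrow> real" where
  "hfun f \<beta> X = gfun f X + \<beta>/4 * (norm (transpose X ** X - mat 1))\<^sup>2"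

definition Gfun :: "(real^'p^'n \<Rightarrow> real) \<Rightarrow> real^'p^'n \<Rightarrow> real^'p^'n" where
  "Gfun f X = egrad f (X ** Amap X)"

text \<open>Omega = {X. spectral norm of X \<le> 1 + 1/12}; the spectral norm is the operator norm.\<close>
definition OmegaSet :: "(real^'p^'n) set" where
  "OmegaSet = {X. onorm (\<lambda>v. X *v v) \<le> 1 + 1/12}"

definition OmegaBar :: "real \<Rightarrow> (real^'p^'n) set" where
  "OmegaBar r = {X. norm (transpose X ** X - mat 1) \<le> r}"

definition M1 :: "(real^'p^'n \<Rightarrow> real) \<Rightarrow> real" where
  "M1 f = (SUP X\<in>(OmegaSet::(real^'p^'n) set). norm (Gfun f X))"

definition M2 :: "(real^'p^'n \<Rightarrow> real) \<Rightarrow> real" where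
  "M2 f = Sup {norm (egrad (gfun f) X - egrad (gfun f) Y) / norm (X - Y) | X Y.
                 X \<in> (OmegaSet::(real^'p^'n) set) \<and> Y \<in> OmegaSet \<and> X \<noteq> Y}"

definition beta_bar :: "(real^'p^'n \<Rightarrow> real) \<Rightarrow> real" where
  "beta_bar f = max (12 * M1 f) (6 * M2 f)"

definition econ_svd :: "real^'p^'n \<Rightarrow> real^'p^'n \<Rightarrow> real^'p^'p \<Rightarrow> real^'p^'p \<Rightarrow> bool" where
  "econ_svd X U S V \<longleftrightarrow> transpose U ** U = mat 1 \<and> transpose V ** V = mat 1 \<and>
     (\<forall>i j. i \<noteq> j \<longrightarrow> S $ i $ j = 0) \<and> (\<forall>i. S $ i $ i \<ge> 0) \<and>
     X = U ** S ** transpose V"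

definition polar_proj :: "real^'p^'n \<Rightarrow> real^'p^'n" where
  "polar_proj X = (THE Q. \<exists>U S V. econ_svd X U S V \<and> Q = U ** transpose V)"

end

(* Write E = X^T X - I and let X = Y P be the polar decomposition, Y = P_S(X) on the Stiefel
   manifold, so that ||X - Y|| = ||P - I|| <= ||E||.  Since grad h(X) = grad g(X) + beta X E and
   grad g(Y) = grad f(Y) on the manifold, grad h(X) equals grad f(Y) + beta Y E up to the error
   (grad g(X) - grad g(Y)) + beta (X - Y) E.  The two main terms are orthogonal (Y^T grad f(Y) is
   skew, E is symmetric), so their sum has norm sqrt(||grad f(Y)||^2 + beta^2 ||E||^2).  Both X and
   Y lie in Omega, where grad g is (M2 <= beta/6)-Lipschitz, so with ||E|| <= 1/6 the error is at
   most beta ||E|| / 3, and sqrt(a^2 + b^2) - b/3 >= a/2 + b/4 finishes the estimate.  The polar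
   factor is obtained from the spectral decomposition of X^T X, which is close to I. *)

theory Submission
  imports Defs
begin

section \<open>Frobenius inner product of matrices\<close>

lemma inner_matrix: "(A::real^'m^'n) \<bullet> B = (\<Sum>i\<in>UNIV. \<Sum>j\<in>UNIV. A$i$j * B$i$j)"
  by (simp add: inner_vec_def)

lemma matrix_mult_row: "((B::real^'m^'n) ** (C::real^'p^'m)) $ i = B$i v* C"
  by (simp add: vec_eq_iff matrix_matrix_mult_def vector_matrix_mult_def mult.commute)

lemma inner_transpose: "(A::real^'p^'n) \<bullet> transpose B = transpose A \<bullet> B"
proof -
  have "(\<Sum>i\<in>UNIV. \<Sum>j\<in>UNIV. A$i$j * B$j$i) = (\<Sum>j\<in>UNIV. \<Sum>i\<in>UNIV. A$i$j * B$j$i)"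
    by (rule sum.swap)
  then show ?thesis by (simp add: inner_matrix transpose_def)
qed

lemma inner_matrix_mult_right: "(A::real^'p^'n) \<bullet> ((B::real^'m^'n) ** C) = (A ** transpose C) \<bullet> B"
proof -
  have "A \<bullet> (B ** C) = (\<Sum>i\<in>UNIV. A$i \<bullet> (B$i v* C))" by (simp add: inner_vec_def matrix_mult_row)
  also have "\<dots> = (\<Sum>i\<in>UNIV. (A ** transpose C)$i \<bullet> B$i)"
    by (rule sum.cong[OF refl]) (metis matrix_mult_row dot_lmul_matrix inner_commute vector_transpose_matrix)
  finally show ?thesis by (simp add: inner_vec_def)
qed

lemma inner_matrix_mult_left: "(A::real^'p^'n) \<bullet> ((B::real^'m^'n) ** C) = (transpose B ** A) \<bullet> C"
proof -
  have "A \<bullet> (B ** C) = transpose A \<bullet> (transpose C ** transpose B)"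
    using inner_transpose[of A "transpose (B ** C)"] by (simp add: matrix_transpose_mul)
  also have "\<dots> = (transpose A ** B) \<bullet> transpose C"
    by (simp add: inner_matrix_mult_right)
  also have "\<dots> = (transpose B ** A) \<bullet> C"
    by (simp add: inner_transpose matrix_transpose_mul)
  finally show ?thesis .
qed

lemma norm_transpose: "norm (transpose (A::real^'p^'n)) = norm A"
  by (simp add: norm_eq_sqrt_inner inner_transpose)

lemma norm_matrix_sq_rows: "(norm (A::real^'m^'n))\<^sup>2 = (\<Sum>i\<in>UNIV. (norm (A$i))\<^sup>2)"
  by (simp add: power2_norm_eq_inner inner_vec_def)

lemma inner_square_le: "((x::'a::real_inner) \<bullet> y)\<^sup>2 \<le> (norm x)\<^sup>2 * (norm y)\<^sup>2"
  by (simp add: power2_norm_eq_inner Cauchy_Schwarz_ineq)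

lemma norm_matrix_vector_mult_le: "norm ((A::real^'p^'n) *v x) \<le> norm A * norm x"
proof -
  have "(norm (A *v x))\<^sup>2 = (\<Sum>i\<in>UNIV. (A$i \<bullet> x)\<^sup>2)"
    unfolding power2_norm_eq_inner by (simp add: inner_vec_def matrix_vector_mult_def power2_eq_square)
  also have "\<dots> \<le> (\<Sum>i\<in>UNIV. (norm (A$i))\<^sup>2 * (norm x)\<^sup>2)"
    by (intro sum_mono inner_square_le)
  also have "\<dots> = (norm A * norm x)\<^sup>2"
    by (simp add: sum_distrib_right norm_matrix_sq_rows power_mult_distrib)
  finally show ?thesis by (rule power2_le_imp_le) simp
qed

lemma norm_matrix_mult_le: "norm ((A::real^'m^'n) ** (B::real^'p^'m)) \<le> norm A * norm B"
proof -
  have "(norm (A ** B))\<^sup>2 = (\<Sum>i\<in>UNIV. \<Sum>j\<in>UNIV. (A$i \<bullet> transpose B $ j)\<^sup>2)"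
    unfolding power2_norm_eq_inner
    by (simp add: inner_vec_def matrix_matrix_mult_def transpose_def power2_eq_square mult_ac)
  also have "\<dots> \<le> (\<Sum>i\<in>UNIV. \<Sum>j\<in>UNIV. (norm (A$i))\<^sup>2 * (norm (transpose B $ j))\<^sup>2)"
    by (intro sum_mono inner_square_le)
  also have "\<dots> = (\<Sum>i\<in>UNIV. (norm (A$i))\<^sup>2) * (\<Sum>j\<in>UNIV. (norm (transpose B $ j))\<^sup>2)"
    by (rule sum_product[symmetric])
  also have "\<dots> = (norm A * norm B)\<^sup>2"
    by (simp only: norm_matrix_sq_rows[symmetric] power_mult_distrib norm_transpose)
  finally show ?thesis by (rule power2_le_imp_le) simp
qed

lemma bounded_bilinear_matrix_mult:
  "bounded_bilinear ((**) :: real^'m^'n \<Rightarrow> real^'p^'m \<Rightarrow> real^'p^'n)"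
proof -
  have "bilinear ((**) :: real^'m^'n \<Rightarrow> real^'p^'m \<Rightarrow> real^'p^'n)"
    unfolding bilinear_def
    by (auto intro!: linearI simp: vec_eq_iff matrix_matrix_mult_def sum.distrib
        sum_distrib_left algebra_simps)
  then show ?thesis by (simp add: bilinear_conv_bounded_bilinear)
qed

lemma bounded_linear_transpose: "bounded_linear (transpose :: real^'m^'n \<Rightarrow> real^'n^'m)"
  by (auto intro!: linearI simp: vec_eq_iff transpose_def simp flip: linear_conv_bounded_linear)

lemmas matrix_mult_algebra =
  bounded_bilinear.add_left[OF bounded_bilinear_matrix_mult]
  bounded_bilinear.add_right[OF bounded_bilinear_matrix_mult]
  bounded_bilinear.diff_left[OF bounded_bilinear_matrix_mult]
  bounded_bilinear.diff_right[OF bounded_bilinear_matrix_mult]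
  bounded_bilinear.minus_left[OF bounded_bilinear_matrix_mult]
  bounded_bilinear.minus_right[OF bounded_bilinear_matrix_mult]
  bounded_bilinear.scaleR_left[OF bounded_bilinear_matrix_mult]
  bounded_bilinear.scaleR_right[OF bounded_bilinear_matrix_mult]
  linear_add[OF bounded_linear.linear[OF bounded_linear_transpose]]
  linear_diff[OF bounded_linear.linear[OF bounded_linear_transpose]]
  linear_neg[OF bounded_linear.linear[OF bounded_linear_transpose]]
  linear_scale[OF bounded_linear.linear[OF bounded_linear_transpose]]
  matrix_transpose_mul matrix_mul_assoc

lemma norm_orthonormal_left:
  assumes "transpose Q ** Q = mat 1"
  shows "norm ((Q::real^'p^'n) ** (B::real^'m^'p)) = norm B"
  by (simp add: norm_eq_sqrt_inner inner_matrix_mult_left matrix_mul_assoc assms)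

lemma norm_orthonormal_right:
  assumes "R ** transpose R = mat 1"
  shows "norm ((B::real^'p^'n) ** (R::real^'m^'p)) = norm B"
  by (simp add: norm_eq_sqrt_inner inner_matrix_mult_right assms flip: matrix_mul_assoc)

section \<open>Gradients of g and h\<close>

lemma egrad_eqI:
  assumes "(\<phi> has_derivative (\<lambda>H. G \<bullet> H)) (at X)"
  shows "egrad \<phi> X = G"
  unfolding egrad_def
proof (rule the_equality)
  fix G' assume "(\<phi> has_derivative (\<lambda>H. G' \<bullet> H)) (at X)"
  with assms have "(\<lambda>H. G \<bullet> H) = (\<lambda>H. G' \<bullet> H)" by (rule has_derivative_unique)
  then have "G' \<bullet> (G' - G) = G \<bullet> (G' - G)" by metis
  then have "(G' - G) \<bullet> (G' - G) = 0" by (simp add: inner_diff_left)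
  then show "G' = G" by simp
qed (rule assms)

lemma has_derivative_inner_representation:
  fixes \<phi> :: "'a::euclidean_space \<Rightarrow> real"
  assumes "(\<phi> has_derivative \<phi>') F"
  shows "(\<phi> has_derivative (\<lambda>H. (\<Sum>b\<in>Basis. \<phi>' b *\<^sub>R b) \<bullet> H)) F"
proof -
  have lin: "linear \<phi>'" using assms by (rule has_derivative_linear)
  have "\<phi>' H = (\<Sum>b\<in>Basis. \<phi>' b *\<^sub>R b) \<bullet> H" for H
  proof -
    have "\<phi>' H = \<phi>' (\<Sum>b\<in>Basis. (H \<bullet> b) *\<^sub>R b)" by (simp add: euclidean_representation)
    also have "\<dots> = (\<Sum>b\<in>Basis. \<phi>' b * (b \<bullet> H))"
      using lin by (simp add: linear_sum linear_scale inner_commute mult.commute)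
    finally show ?thesis by (simp add: inner_sum_left)
  qed
  then have "\<phi>' = (\<lambda>H. (\<Sum>b\<in>Basis. \<phi>' b *\<^sub>R b) \<bullet> H)" by (rule ext)
  with assms show ?thesis by simp
qed

lemma egrad_has_derivative:
  fixes \<phi> :: "real^'p^'n \<Rightarrow> real"
  assumes "\<phi> differentiable (at X)"
  shows "(\<phi> has_derivative (\<lambda>H. egrad \<phi> X \<bullet> H)) (at X)"
proof -
  obtain \<phi>' where "(\<phi> has_derivative \<phi>') (at X)"
    using assms unfolding differentiable_def by blast
  note rep = has_derivative_inner_representation[OF this]
  with egrad_eqI[OF rep] show ?thesis by simp
qed

lemma has_derivative_gram:
  "((\<lambda>X::real^'p^'n. transpose X ** X) has_derivative (\<lambda>H. transpose X ** H + transpose H ** X)) (at X)"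
  by (rule bounded_bilinear.FDERIV[OF bounded_bilinear_matrix_mult
      bounded_linear_imp_has_derivative[OF bounded_linear_transpose] has_derivative_ident])

lemma has_derivative_mult_Amap:
  "((\<lambda>X::real^'p^'n. X ** Amap X) has_derivative
     (\<lambda>H. H ** Amap X - (1/2) *\<^sub>R (X ** (transpose H ** X + transpose X ** H)))) (at X)"
proof -
  have "(Amap has_derivative (\<lambda>H. - (1/2) *\<^sub>R (transpose X ** H + transpose H ** X))) (at X)"
    unfolding Amap_def[abs_def] by (rule derivative_eq_intros has_derivative_gram | simp)+
  from bounded_bilinear.FDERIV[OF bounded_bilinear_matrix_mult has_derivative_ident this]
  show ?thesis by (simp add: matrix_mult_algebra add.commute)
qed

definition grad_g :: "(real^'p^'n \<Rightarrow> real) \<Rightarrow> real^'p^'n \<Rightarrow> real^'p^'n" where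
  "grad_g f X = Gfun f X ** Amap X - X ** symPart (transpose X ** Gfun f X)"

lemma transpose_Amap: "transpose (Amap X) = Amap X"
  by (simp add: Amap_def matrix_mult_algebra)

lemma has_derivative_gfun:
  fixes f :: "real^'p^'n \<Rightarrow> real"
  assumes "\<forall>Y. f differentiable (at Y)"
  shows "(gfun f has_derivative (\<lambda>H. grad_g f X \<bullet> H)) (at X)"
proof -
  define G where "G = Gfun f X"
  have chain: "(gfun f has_derivative
      (\<lambda>H. G \<bullet> (H ** Amap X - (1/2) *\<^sub>R (X ** (transpose H ** X + transpose X ** H))))) (at X)"
    unfolding G_def Gfun_def gfun_def[abs_def]
    using has_derivative_compose[OF has_derivative_mult_Amap egrad_has_derivative] assms
    by blast
  have eq: "G \<bullet> (H ** Amap X - (1/2) *\<^sub>R (X ** (transpose H ** X + transpose X ** H)))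
      = grad_g f X \<bullet> H" for H
  proof -
    have e1: "G \<bullet> (H ** Amap X) = (G ** Amap X) \<bullet> H"
      using inner_matrix_mult_right[of G H "Amap X"] by (simp add: transpose_Amap)
    have "G \<bullet> (X ** (transpose H ** X)) = ((transpose X ** G) ** transpose X) \<bullet> transpose H"
      by (rule trans[OF inner_matrix_mult_left inner_matrix_mult_right])
    also have "\<dots> = (X ** transpose G ** X) \<bullet> H"
      by (simp add: inner_transpose matrix_transpose_mul matrix_mul_assoc)
    finally have e2: "G \<bullet> (X ** (transpose H ** X)) = (X ** transpose G ** X) \<bullet> H" .
    have e3: "G \<bullet> (X ** (transpose X ** H)) = (X ** transpose X ** G) \<bullet> H"
      using inner_matrix_mult_left[of G X "transpose X ** H"]
        inner_matrix_mult_left[of "transpose X ** G" "transpose X" H]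
      by (simp add: matrix_mul_assoc)
    have "grad_g f X = G ** Amap X - (1/2) *\<^sub>R (X ** transpose X ** G + X ** transpose G ** X)"
      unfolding grad_g_def G_def symPart_def by (simp add: matrix_mult_algebra)
    then show ?thesis
      by (simp add: e1 e2 e3 inner_diff_left inner_add_left inner_diff_right inner_add_right
          matrix_add_ldistrib)
  qed
  show ?thesis using chain unfolding eq .
qed

lemma has_derivative_hfun:
  fixes f :: "real^'p^'n \<Rightarrow> real"
  assumes "\<forall>Y. f differentiable (at Y)"
  shows "(hfun f \<beta> has_derivative
     (\<lambda>H. (grad_g f X + \<beta> *\<^sub>R (X ** (transpose X ** X - mat 1))) \<bullet> H)) (at X)"
proof -
  define E where "E = transpose X ** X - mat 1"
  have dE: "((\<lambda>X::real^'p^'n. transpose X ** X - mat 1) has_derivative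
      (\<lambda>H. transpose X ** H + transpose H ** X)) (at X)"
    using has_derivative_diff[OF has_derivative_gram has_derivative_const] by simp
  have "E \<bullet> (transpose H ** X) = (X ** E) \<bullet> H" for H
    by (simp add: inner_matrix_mult_right inner_transpose E_def matrix_mult_algebra)
  moreover have "E \<bullet> (transpose X ** H) = (X ** E) \<bullet> H" for H
    by (simp add: inner_matrix_mult_left)
  ultimately have dN_eq: "E \<bullet> (transpose X ** H + transpose H ** X)
      + (transpose X ** H + transpose H ** X) \<bullet> E = 4 * ((X ** E) \<bullet> H)" for H
    by (simp add: inner_add_right inner_add_left inner_commute[of _ E])
  note dN = bounded_bilinear.FDERIV[OF bounded_bilinear_inner dE dE]
  have "((\<lambda>X::real^'p^'n. \<beta>/4 * (norm (transpose X ** X - mat 1))\<^sup>2) has_derivative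
      (\<lambda>H. \<beta> * ((X ** E) \<bullet> H))) (at X)"
    using has_derivative_mult_right[OF dN, of "\<beta>/4"]
    unfolding power2_norm_eq_inner E_def[symmetric] dN_eq by simp
  from has_derivative_add[OF has_derivative_gfun[OF assms] this]
  show ?thesis unfolding hfun_def[abs_def] E_def by (simp add: inner_add_left)
qed

lemma egrad_hfun:
  assumes "\<forall>Y. f differentiable (at Y)"
  shows "egrad (hfun f \<beta>) X = grad_g f X + \<beta> *\<^sub>R (X ** (transpose X ** X - mat 1))"
  by (rule egrad_eqI[OF has_derivative_hfun[OF assms]])

lemma egrad_gfun:
  assumes "\<forall>Y. f differentiable (at Y)"
  shows "egrad (gfun f) X = grad_g f X"
  by (rule egrad_eqI[OF has_derivative_gfun[OF assms]])

lemma grad_g_stiefel: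
  assumes "transpose Y ** Y = mat 1"
  shows "grad_g f Y = rgrad f Y"
proof -
  have "Amap Y = mat 1" by (simp add: Amap_def assms vec_eq_iff mat_def)
  then show ?thesis by (simp add: grad_g_def rgrad_def Gfun_def)
qed

section \<open>Lipschitz continuity of the gradient of g on Omega\<close>

lemma loc_lipschitz_imp_lipschitz_on_compact:
  assumes "loc_lipschitz g" "compact K"
  obtains L where "L-lipschitz_on K g"
proof -
  have "local_lipschitz {0::real} K (\<lambda>_. g)"
  proof (rule local_lipschitzI)
    fix t x assume "t \<in> {0::real}" "x \<in> K"
    obtain e L where "e > 0" and L: "\<forall>y\<in>ball x e. \<forall>z\<in>ball x e. dist (g y) (g z) \<le> L * dist y z"
      using assms(1) unfolding loc_lipschitz_def by blast
    have "\<bar>L\<bar>-lipschitz_on (cball x (e/2) \<inter> K) g"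
    proof (rule lipschitz_onI)
      fix y z assume "y \<in> cball x (e/2) \<inter> K" "z \<in> cball x (e/2) \<inter> K"
      with \<open>e > 0\<close> L have "dist (g y) (g z) \<le> L * dist y z" by auto
      also have "\<dots> \<le> \<bar>L\<bar> * dist y z" by (simp add: mult_right_mono)
      finally show "dist (g y) (g z) \<le> \<bar>L\<bar> * dist y z" .
    qed (rule abs_ge_zero)
    with \<open>e > 0\<close> show "\<exists>u>0. \<exists>L. \<forall>t\<in>cball t u \<inter> {0::real}. L-lipschitz_on (cball x u \<inter> K) g"
      by (intro exI[of _ "e/2"]) auto
  qed
  from local_lipschitz_compact_implies_lipschitz[OF this assms(2)] that show ?thesis by auto
qed

lemma lipschitz_on_compact_boundE:
  assumes "L-lipschitz_on K g" "compact K"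
  obtains B where "B \<ge> 0" "\<And>x. x \<in> K \<Longrightarrow> norm (g x) \<le> B"
  using compact_imp_bounded[OF compact_continuous_image[OF lipschitz_on_continuous_on[OF assms(1)]
      assms(2)]]
  unfolding bounded_pos by (meson less_imp_le image_eqI)

lemma ex_lipschitz_on_bilinear:
  assumes "bounded_bilinear bil" "compact K"
    and "\<exists>L. L-lipschitz_on K g" "\<exists>L. L-lipschitz_on K h"
  shows "\<exists>L. L-lipschitz_on K (\<lambda>x. bil (g x) (h x))"
proof -
  interpret bounded_bilinear bil by (rule assms(1))
  obtain Lg Lh where Lg: "Lg-lipschitz_on K g" and Lh: "Lh-lipschitz_on K h"
    using assms(3,4) by blast
  obtain Bg Bh where "Bg \<ge> 0" "Bh \<ge> 0"
    and Bg: "\<And>x. x \<in> K \<Longrightarrow> norm (g x) \<le> Bg" and Bh: "\<And>x. x \<in> K \<Longrightarrow> norm (h x) \<le> Bh"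
    using lipschitz_on_compact_boundE[OF Lg \<open>compact K\<close>]
      lipschitz_on_compact_boundE[OF Lh \<open>compact K\<close>] by metis
  obtain C where "C \<ge> 0" and C: "\<And>a b. norm (bil a b) \<le> norm a * norm b * C"
    using nonneg_bounded by blast
  have "dist (bil (g y) (h y)) (bil (g z) (h z)) \<le> (C * (Lg * Bh + Bg * Lh)) * dist y z"
    if "y \<in> K" "z \<in> K" for y z
  proof -
    have "bil (g y) (h y) - bil (g z) (h z) = bil (g y - g z) (h y) + bil (g z) (h y - h z)"
      by (simp add: diff_left diff_right)
    then have "dist (bil (g y) (h y)) (bil (g z) (h z))
        \<le> norm (g y - g z) * norm (h y) * C + norm (g z) * norm (h y - h z) * C"
      by (metis C add_mono dist_norm norm_triangle_le)
    also have "\<dots> \<le> (Lg * dist y z) * Bh * C + Bg * (Lh * dist y z) * C"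
      using that \<open>C \<ge> 0\<close> \<open>Bg \<ge> 0\<close> Bg Bh lipschitz_onD[OF Lg] lipschitz_onD[OF Lh]
        lipschitz_on_nonneg[OF Lg] lipschitz_on_nonneg[OF Lh]
      by (intro add_mono mult_right_mono mult_mono) (auto simp: dist_norm)
    finally show ?thesis by (simp add: algebra_simps)
  qed
  moreover have "0 \<le> C * (Lg * Bh + Bg * Lh)"
    using \<open>C \<ge> 0\<close> \<open>Bg \<ge> 0\<close> \<open>Bh \<ge> 0\<close> lipschitz_on_nonneg[OF Lg] lipschitz_on_nonneg[OF Lh]
    by simp
  ultimately show ?thesis by (blast intro: lipschitz_onI)
qed

lemma ex_lipschitz_on_bounded_linear:
  assumes "bounded_linear T" "\<exists>L. L-lipschitz_on K g"
  shows "\<exists>L. L-lipschitz_on K (\<lambda>x. T (g x))"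
proof -
  obtain L where L: "L-lipschitz_on K g" using assms(2) by blast
  obtain B where "B-lipschitz_on (g ` K) T"
    using bounded_linear.lipschitz_boundE[OF assms(1)] by blast
  with L show ?thesis by (blast intro: lipschitz_on_compose2)
qed

lemma ex_lipschitz_on_basic:
  fixes f g :: "'a::metric_space \<Rightarrow> 'b::real_normed_vector"
  shows "\<exists>L. L-lipschitz_on K (\<lambda>x. c)" "\<exists>L. L-lipschitz_on K (\<lambda>x. x)"
    and "\<exists>L. L-lipschitz_on K f \<Longrightarrow> \<exists>L. L-lipschitz_on K g \<Longrightarrow> \<exists>L. L-lipschitz_on K (\<lambda>x. f x + g x)"
    and "\<exists>L. L-lipschitz_on K f \<Longrightarrow> \<exists>L. L-lipschitz_on K g \<Longrightarrow> \<exists>L. L-lipschitz_on K (\<lambda>x. f x - g x)"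
    and "\<exists>L. L-lipschitz_on K f \<Longrightarrow> \<exists>L. L-lipschitz_on K (\<lambda>x. a *\<^sub>R f x)"
  by (blast intro: lipschitz_on_constant lipschitz_on_id lipschitz_on_add lipschitz_on_diff
      lipschitz_on_cmult)+

lemmas ex_lipschitz_on_intros =
  ex_lipschitz_on_bilinear[OF bounded_bilinear_matrix_mult]
  ex_lipschitz_on_bounded_linear[OF bounded_linear_transpose]
  ex_lipschitz_on_basic

lemma lipschitz_on_compact_grad_g:
  fixes f :: "real^'p^'n \<Rightarrow> real"
  assumes "loc_lipschitz (egrad f)" "compact K"
  obtains L where "L-lipschitz_on K (grad_g f)"
proof -
  have "\<exists>L. L-lipschitz_on K (\<lambda>X::real^'p^'n. X ** Amap X)"
    unfolding Amap_def using \<open>compact K\<close> by (intro ex_lipschitz_on_intros) blast+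
  then obtain L where L: "L-lipschitz_on K (\<lambda>X::real^'p^'n. X ** Amap X)" ..
  have "compact ((\<lambda>X. X ** Amap X) ` K)"
    by (rule compact_continuous_image[OF lipschitz_on_continuous_on[OF L] \<open>compact K\<close>])
  then obtain L' where "L'-lipschitz_on ((\<lambda>X. X ** Amap X) ` K) (egrad f)"
    using loc_lipschitz_imp_lipschitz_on_compact[OF assms(1)] by blast
  then have "\<exists>L. L-lipschitz_on K (Gfun f)"
    unfolding Gfun_def[abs_def] using lipschitz_on_compose2[OF L] by blast
  then have "\<exists>L. L-lipschitz_on K (grad_g f)"
    unfolding grad_g_def[abs_def] symPart_def Amap_def using \<open>compact K\<close>
    by (intro ex_lipschitz_on_intros) blast+
  with that show ?thesis by blast
qed

lemma OmegaSet_iff: "(X::real^'p^'n) \<in> OmegaSet \<longleftrightarrow> (\<forall>v. norm (X *v v) \<le> 13/12 * norm v)"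
proof
  assume "X \<in> OmegaSet"
  then have "onorm ((*v) X) \<le> 13/12" by (simp add: OmegaSet_def)
  then show "\<forall>v. norm (X *v v) \<le> 13/12 * norm v"
    using onorm[OF matrix_vector_mul_bounded_linear, of X] by (meson mult_right_mono norm_ge_zero order_trans)
next
  assume "\<forall>v. norm (X *v v) \<le> 13/12 * norm v"
  then have "onorm ((*v) X) \<le> 13/12" by (intro onorm_le) auto
  then show "X \<in> OmegaSet" by (simp add: OmegaSet_def)
qed

lemma compact_OmegaSet: "compact (OmegaSet :: (real^'p^'n) set)"
proof -
  have "linear (\<lambda>X::real^'p^'n. X *v v)" for v
    by (auto intro!: linearI simp: vec_eq_iff matrix_vector_mult_def sum.distrib
        sum_distrib_left distrib_right mult.assoc)
  then have closed_v: "closed {X::real^'p^'n. norm (X *v v) \<le> 13/12 * norm v}" for v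
    by (intro closed_Collect_le continuous_intros linear_continuous_on)
      (simp add: linear_conv_bounded_linear)
  have "OmegaSet = (\<Inter>v. {X::real^'p^'n. norm (X *v v) \<le> 13/12 * norm v})"
    by (auto simp: OmegaSet_iff)
  also have "closed \<dots>" by (rule closed_INT) (rule ballI, rule closed_v)
  finally have "closed (OmegaSet :: (real^'p^'n) set)" .
  moreover have "norm X \<le> real CARD('n) * (real CARD('p) * (13/12))"
    if "X \<in> (OmegaSet :: (real^'p^'n) set)" for X
  proof -
    have "\<bar>X$i$j\<bar> \<le> 13/12" for i j
      using matrix_component_le_onorm[of X i j] that by (simp add: OmegaSet_def)
    then have "norm (X$i) \<le> real CARD('p) * (13/12)" for i
      using norm_le_l1_cart[of "X$i"] sum_mono[of UNIV "\<lambda>j. \<bar>X$i$j\<bar>" "\<lambda>_. 13/12"]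
      by simp
    then have "(\<Sum>i\<in>UNIV. norm (X$i)) \<le> (\<Sum>i\<in>(UNIV::'n set). real CARD('p) * (13/12))"
      by (intro sum_mono)
    moreover have "norm X \<le> (\<Sum>i\<in>UNIV. norm (X$i))"
      by (simp add: norm_vec_def L2_set_le_sum)
    ultimately show ?thesis by simp
  qed
  then have "bounded (OmegaSet :: (real^'p^'n) set)" unfolding bounded_iff by blast
  ultimately show ?thesis by (simp add: compact_eq_bounded_closed)
qed

lemma norm_matrix_vector_mult_sq_le:
  "(norm ((X::real^'p^'n) *v v))\<^sup>2 \<le> (1 + norm (transpose X ** X - mat 1)) * (norm v)\<^sup>2"
proof -
  define E where "E = transpose X ** X - mat 1"
  have "((X *v v) v* X) \<bullet> v = (X *v v) \<bullet> (X *v v)" by (rule dot_lmul_matrix)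
  moreover have "(transpose X ** X) *v v = (X *v v) v* X"
    by (simp add: matrix_vector_mul_assoc[symmetric])
  ultimately have "(norm (X *v v))\<^sup>2 = v \<bullet> ((E + mat 1) *v v)"
    by (simp add: E_def power2_norm_eq_inner inner_commute)
  also have "\<dots> = v \<bullet> (E *v v) + (norm v)\<^sup>2"
    by (simp add: matrix_vector_mult_add_rdistrib inner_add_right power2_norm_eq_inner)
  also have "v \<bullet> (E *v v) \<le> norm v * (norm E * norm v)"
    by (rule order_trans[OF norm_cauchy_schwarz mult_left_mono[OF norm_matrix_vector_mult_le]])
      simp
  finally show ?thesis by (simp add: E_def power2_eq_square algebra_simps)
qed

lemma OmegaBar_subset_OmegaSet:
  assumes "r \<le> 1/6"
  shows "OmegaBar r \<subseteq> (OmegaSet :: (real^'p^'n) set)"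
proof
  fix X :: "real^'p^'n" assume "X \<in> OmegaBar r"
  then have "1 + norm (transpose X ** X - mat 1) \<le> 169/144"
    using assms by (simp add: OmegaBar_def)
  then have "(norm (X *v v))\<^sup>2 \<le> (13/12 * norm v)\<^sup>2" for v
  proof -
    note norm_matrix_vector_mult_sq_le[of X v]
    also have "(1 + norm (transpose X ** X - mat 1)) * (norm v)\<^sup>2 \<le> 169/144 * (norm v)\<^sup>2"
      using \<open>1 + _ \<le> 169/144\<close> by (rule mult_right_mono) simp
    also have "\<dots> = (13/12 * norm v)\<^sup>2" by (simp add: power2_eq_square)
    finally show ?thesis .
  qed
  then have "norm (X *v v) \<le> 13/12 * norm v" for v
    by (rule power2_le_imp_le) simp
  then show "X \<in> OmegaSet" unfolding OmegaSet_iff by blast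
qed

lemma bdd_above_grad_g_quotients:
  fixes f :: "real^'p^'n \<Rightarrow> real"
  assumes "\<forall>Y. f differentiable (at Y)" "loc_lipschitz (egrad f)"
  shows "bdd_above {norm (egrad (gfun f) X - egrad (gfun f) Y) / norm (X - Y) | X Y.
                 X \<in> (OmegaSet::(real^'p^'n) set) \<and> Y \<in> OmegaSet \<and> X \<noteq> Y}"
proof -
  obtain L where L: "L-lipschitz_on (OmegaSet :: (real^'p^'n) set) (grad_g f)"
    using lipschitz_on_compact_grad_g[OF assms(2) compact_OmegaSet] .
  have "norm (grad_g f X - grad_g f Y) / norm (X - Y) \<le> L"
    if "X \<in> OmegaSet" "Y \<in> OmegaSet" "X \<noteq> Y" for X Y :: "real^'p^'n"
    using lipschitz_on_normD[OF L that(1,2)] that(3) by (simp add: divide_le_eq)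
  then show ?thesis
    unfolding egrad_gfun[OF assms(1)] by (intro bdd_aboveI[of _ L]) blast
qed

lemma norm_grad_g_diff_le_M2:
  fixes f :: "real^'p^'n \<Rightarrow> real"
  assumes "\<forall>Y. f differentiable (at Y)" "loc_lipschitz (egrad f)"
    and "X \<in> OmegaSet" "Y \<in> OmegaSet"
  shows "norm (grad_g f X - grad_g f Y) \<le> M2 f * norm (X - Y)"
proof (cases "X = Y")
  case False
  then have "norm (grad_g f X - grad_g f Y) / norm (X - Y) \<le> M2 f"
    unfolding M2_def using assms(3,4)
    by (intro cSup_upper[OF _ bdd_above_grad_g_quotients[OF assms(1,2)]])
      (auto simp: egrad_gfun[OF assms(1)])
  with False show ?thesis by (simp add: divide_le_eq)
qed simp

lemma M2_nonneg:
  fixes f :: "real^'p^'n \<Rightarrow> real" and Y :: "real^'p^'n"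
  assumes "\<forall>Y. f differentiable (at Y)" "loc_lipschitz (egrad f)"
    and "Y \<in> OmegaSet" "Y \<noteq> 0"
  shows "0 \<le> M2 f"
proof -
  have "0 \<in> (OmegaSet :: (real^'p^'n) set)" by (simp add: OmegaSet_iff)
  have "0 \<le> norm (egrad (gfun f) Y - egrad (gfun f) 0) / norm (Y - 0)" by simp
  also have "\<dots> \<le> M2 f"
    unfolding M2_def using assms(3,4) \<open>0 \<in> OmegaSet\<close>
    by (intro cSup_upper[OF _ bdd_above_grad_g_quotients[OF assms(1,2)]]) blast
  finally show ?thesis .
qed

section \<open>Spectral theorem for symmetric matrices\<close>

lemma symmetric_matrix_inner:
  fixes A :: "real^'p^'p"
  assumes "transpose A = A"
  shows "x \<bullet> (A *v y) = (A *v x) \<bullet> y"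
  by (metis assms dot_lmul_matrix inner_commute transpose_matrix_vector)

lemma linear_le_quadratic_imp_zero:
  fixes b d :: real
  assumes "\<And>s. 2 * s * b \<le> s\<^sup>2 * d"
  shows "b = 0"
proof -
  define k where "k = \<bar>d\<bar> + 1"
  have "k > 0" by (simp add: k_def)
  have "k\<^sup>2 * (2 * (b / k) * b) \<le> k\<^sup>2 * ((b / k)\<^sup>2 * d)"
    using assms[of "b / k"] by (rule mult_left_mono) simp
  then have "2 * b * b * k \<le> b * b * d"
    using \<open>k > 0\<close> by (simp add: power2_eq_square field_simps)
  also have "\<dots> \<le> b * b * \<bar>d\<bar>" by (intro mult_left_mono) auto
  finally have "b * b * (k + 1) \<le> 0" by (simp add: k_def algebra_simps)
  then have "b * b \<le> 0" using \<open>k > 0\<close> by (simp add: mult_le_0_iff)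
  then show ?thesis by (auto simp: mult_le_0_iff)
qed

text \<open>First-order optimality of the Rayleigh quotient: a maximiser \<open>w\<close> over the unit sphere of
  \<open>W\<close> has \<open>A w\<close> orthogonal to \<open>w\<^sup>\<perp> \<inter> W\<close>, since \<open>q(w + s z) \<le> c \<parallel>w + s z\<parallel>\<^sup>2\<close> for all \<open>s\<close>.\<close>
lemma rayleigh_maximiser_orthogonal:
  fixes A :: "real^'p^'p"
  assumes sym: "transpose A = A" and "subspace W" and "w \<in> W" "w \<bullet> w = 1"
    and max: "\<And>y. y \<in> W \<Longrightarrow> y \<bullet> (A *v y) \<le> (w \<bullet> (A *v w)) * (y \<bullet> y)"
    and "z \<in> W" "z \<bullet> w = 0"
  shows "z \<bullet> (A *v w) = 0"
proof (rule linear_le_quadratic_imp_zero)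
  fix s :: real
  define c where "c = w \<bullet> (A *v w)"
  have "w \<bullet> (A *v z) = z \<bullet> (A *v w)"
    using symmetric_matrix_inner[OF sym, of w z] by (simp add: inner_commute)
  then have "(w + s *\<^sub>R z) \<bullet> (A *v (w + s *\<^sub>R z))
      = c + 2 * s * (z \<bullet> (A *v w)) + s\<^sup>2 * (z \<bullet> (A *v z))"
    by (simp add: c_def matrix_vector_mult_scaleR matrix_vector_right_distrib inner_add_left
        inner_add_right power2_eq_square algebra_simps)
  moreover have "(w + s *\<^sub>R z) \<bullet> (w + s *\<^sub>R z) = 1 + s\<^sup>2 * (z \<bullet> z)"
    using assms(4,7) by (simp add: inner_add_left inner_add_right inner_commute power2_eq_square)
  moreover have "w + s *\<^sub>R z \<in> W"
    using \<open>subspace W\<close> \<open>w \<in> W\<close> \<open>z \<in> W\<close> by (simp add: subspace_add subspace_scale)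
  ultimately have "c + 2 * s * (z \<bullet> (A *v w)) + s\<^sup>2 * (z \<bullet> (A *v z)) \<le> c * (1 + s\<^sup>2 * (z \<bullet> z))"
    using max unfolding c_def by metis
  then show "2 * s * (z \<bullet> (A *v w)) \<le> s\<^sup>2 * (c * (z \<bullet> z) - z \<bullet> (A *v z))"
    by (simp add: algebra_simps)
qed

lemma symmetric_matrix_invariant_subspace_eigenvector:
  fixes A :: "real^'p^'p"
  assumes sym: "transpose A = A" and W: "subspace W" "x \<in> W" "x \<noteq> 0"
    and inv: "\<And>y. y \<in> W \<Longrightarrow> A *v y \<in> W"
  obtains w c where "w \<in> W" "norm w = 1" "A *v w = c *\<^sub>R w"
proof -
  define q where "q y = y \<bullet> (A *v y)" for y
  have "compact (sphere 0 1 \<inter> W)"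
    using W(1) by (intro compact_Int_closed compact_sphere closed_subspace)
  moreover have "x /\<^sub>R norm x \<in> sphere 0 1 \<inter> W"
    using W by (simp add: subspace_scale)
  moreover have "continuous_on (sphere 0 1 \<inter> W) q"
    unfolding q_def by (intro continuous_intros)
  ultimately obtain w where w: "w \<in> sphere 0 1 \<inter> W"
    and wmax: "\<And>y. y \<in> sphere 0 1 \<inter> W \<Longrightarrow> q y \<le> q w"
    using continuous_attains_sup[of "sphere 0 1 \<inter> W" q] by blast
  have "w \<bullet> w = 1" using w by (simp add: dot_square_norm)
  have max: "q y \<le> q w * (y \<bullet> y)" if "y \<in> W" for y
  proof (cases "y = 0")
    case False
    then have "q (y /\<^sub>R norm y) \<le> q w" using that W(1) by (intro wmax) (simp add: subspace_scale)
    moreover have "q (y /\<^sub>R norm y) = q y / (norm y)\<^sup>2"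
      by (simp add: q_def matrix_vector_mult_scaleR power2_eq_square divide_inverse mult_ac)
    ultimately show ?thesis
      using False by (simp add: divide_le_eq dot_square_norm)
  qed (simp add: q_def)
  define u where "u = A *v w - q w *\<^sub>R w"
  have "u \<in> W" using w inv W(1) by (simp add: u_def subspace_diff subspace_scale)
  have "u \<bullet> w = 0"
    using \<open>w \<bullet> w = 1\<close> by (simp add: u_def q_def inner_diff_left inner_commute[of "A *v w" w])
  have "u \<bullet> (A *v w) = 0"
    using rayleigh_maximiser_orthogonal[OF sym W(1) _ \<open>w \<bullet> w = 1\<close> max[unfolded q_def]
        \<open>u \<in> W\<close> \<open>u \<bullet> w = 0\<close>] w
    by (simp add: q_def)
  then have "u \<bullet> u = 0" using \<open>u \<bullet> w = 0\<close> by (simp add: u_def inner_diff_right)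
  then have "A *v w = q w *\<^sub>R w" by (simp add: u_def)
  with w that show ?thesis by auto
qed

lemma symmetric_matrix_orthonormal_eigenvectors:
  fixes A :: "real^'p^'p" and I :: "'p set"
  assumes sym: "transpose A = A"
  shows "\<exists>v \<mu>. (\<forall>i\<in>I. norm (v i) = 1 \<and> A *v v i = \<mu> i *\<^sub>R v i) \<and>
     (\<forall>i\<in>I. \<forall>j\<in>I. i \<noteq> j \<longrightarrow> v i \<bullet> v j = 0)"
  using finite[of I]
proof (induction I rule: finite_induct)
  case (insert i F)
  obtain v \<mu> where eig: "\<forall>j\<in>F. norm (v j) = 1 \<and> A *v v j = \<mu> j *\<^sub>R v j"
    and orth: "\<forall>j\<in>F. \<forall>k\<in>F. j \<noteq> k \<longrightarrow> v j \<bullet> v k = 0"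
    using insert.IH by (elim exE conjE)
  define W where "W = {y. \<forall>j\<in>F. v j \<bullet> y = 0}"
  have "subspace W" by (auto simp: W_def subspace_def inner_add_right)
  have "card F < CARD('p)"
    using insert(2) by (intro psubset_card_mono) auto
  then have "dim (v ` F) < DIM(real^'p)"
    using dim_le_card'[of "v ` F"] card_image_le[of F v] by simp
  then obtain x where "x \<noteq> 0" and x: "\<And>y. y \<in> span (v ` F) \<Longrightarrow> orthogonal x y"
    using orthogonal_to_subspace_exists by blast
  have "v j \<bullet> x = 0" if "j \<in> F" for j
    using x[OF span_base[OF imageI[OF that]]] by (simp add: orthogonal_def inner_commute)
  then have "x \<in> W" unfolding W_def by blast
  have "A *v y \<in> W" if "y \<in> W" for y
  proof -
    have "v j \<bullet> (A *v y) = \<mu> j * (v j \<bullet> y)" if "j \<in> F" for j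
      using eig that by (simp add: symmetric_matrix_inner[OF sym])
    with \<open>y \<in> W\<close> show ?thesis by (simp add: W_def)
  qed
  with symmetric_matrix_invariant_subspace_eigenvector[OF sym \<open>subspace W\<close> \<open>x \<in> W\<close> \<open>x \<noteq> 0\<close>]
  obtain w c where "w \<in> W" "norm w = 1" "A *v w = c *\<^sub>R w" by blast
  then have "\<forall>j\<in>insert i F. norm ((v(i := w)) j) = 1 \<and>
      A *v (v(i := w)) j = (\<mu>(i := c)) j *\<^sub>R (v(i := w)) j"
    using eig insert(2) by auto
  moreover have "(v(i := w)) j \<bullet> (v(i := w)) k = 0"
    if "j \<in> insert i F" "k \<in> insert i F" "j \<noteq> k" for j k
  proof -
    have "v j \<bullet> w = 0" if "j \<in> F" for j using \<open>w \<in> W\<close> that by (simp add: W_def)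
    then show ?thesis
      using that orth insert(2) by (cases "j = i"; cases "k = i") (auto simp: inner_commute)
  qed
  ultimately show ?case by (intro exI[of _ "v(i := w)"] exI[of _ "\<mu>(i := c)"]) blast
qed simp

definition diagm :: "('p \<Rightarrow> real) \<Rightarrow> real^'p^'p" where
  "diagm d = (\<chi> i j. if i = j then d i else 0)"

lemma diagm_nth: "diagm d $ i $ j = (if i = j then d i else 0)"
  by (simp add: diagm_def)

lemma matrix_mult_diagm_right: "((B::real^'p^'n) ** diagm d) $ i $ j = B$i$j * d j"
proof -
  have "(B ** diagm d) $ i $ j = (\<Sum>k\<in>UNIV. B$i$k * (if k = j then d k else 0))"
    unfolding matrix_matrix_mult_def diagm_def by simp
  also have "\<dots> = (\<Sum>k\<in>UNIV. if k = j then B$i$j * d j else 0)"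
    by (rule sum.cong) auto
  finally show ?thesis by simp
qed

lemma matrix_mult_diagm_left: "(diagm d ** (B::real^'n^'p)) $ i $ j = d i * B$i$j"
proof -
  have "(diagm d ** B) $ i $ j = (\<Sum>k\<in>UNIV. (if i = k then d i else 0) * B$k$j)"
    unfolding matrix_matrix_mult_def diagm_def by simp
  also have "\<dots> = (\<Sum>k\<in>UNIV. if k = i then d i * B$i$j else 0)"
    by (rule sum.cong) auto
  finally show ?thesis by simp
qed

theorem spectral_theorem:
  fixes A :: "real^'p^'p"
  assumes "transpose A = A"
  obtains V \<mu> where "orthogonal_matrix V" "A ** V = V ** diagm \<mu>"
proof -
  obtain v :: "'p \<Rightarrow> real^'p" and \<mu> where eig: "\<forall>i. norm (v i) = 1 \<and> A *v v i = \<mu> i *\<^sub>R v i"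
    and orth: "\<forall>i j. i \<noteq> j \<longrightarrow> v i \<bullet> v j = 0"
    using symmetric_matrix_orthonormal_eigenvectors[OF assms, of UNIV] by auto
  define V where "V = (\<chi> r j. v j $ r)"
  have "(transpose V ** V) $ i $ j = v i \<bullet> v j" for i j
    by (simp add: V_def matrix_matrix_mult_def transpose_def inner_vec_def)
  then have "transpose V ** V = mat 1"
    using eig orth by (auto simp: vec_eq_iff mat_def norm_eq_1)
  moreover have "(A ** V) $ r $ j = (A *v v j) $ r" for r j
    by (simp add: V_def matrix_matrix_mult_def matrix_vector_mult_def)
  then have "A ** V = V ** diagm \<mu>"
    using eig by (simp add: vec_eq_iff matrix_mult_diagm_right V_def)
  ultimately show ?thesis using that by (simp add: orthogonal_matrix)
qed

section \<open>Polar decomposition\<close>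

lemma diagm_mult: "diagm a ** diagm b = diagm (\<lambda>i. a i * b i)"
  by (simp add: vec_eq_iff matrix_mult_diagm_right) (simp add: diagm_def)

lemma diagm_one: "diagm (\<lambda>_. 1) = mat 1"
  by (simp add: diagm_def mat_def vec_eq_iff)

lemma transpose_diagm: "transpose (diagm a) = diagm a"
  by (simp add: diagm_def transpose_def vec_eq_iff)

lemma diagm_diff: "diagm a - diagm b = diagm (\<lambda>i. a i - b i)"
  by (simp add: diagm_def vec_eq_iff)

lemma diagm_diag:
  assumes "\<forall>i j. i \<noteq> j \<longrightarrow> (S::real^'p^'p) $ i $ j = 0"
  shows "S = diagm (\<lambda>i. S$i$i)"
  using assms by (auto simp: vec_eq_iff diagm_def)

lemma norm_diagm_sq: "(norm (diagm a))\<^sup>2 = (\<Sum>i\<in>UNIV. (a i)\<^sup>2)"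
proof -
  have "(\<Sum>j\<in>UNIV. diagm a $ i $ j * diagm a $ i $ j) = (a i)\<^sup>2" for i
  proof -
    have "(\<Sum>j\<in>UNIV. diagm a $ i $ j * diagm a $ i $ j) = (\<Sum>j\<in>UNIV. if j = i then a i * a i else 0)"
      by (rule sum.cong) (auto simp: diagm_def)
    then show ?thesis by (simp add: power2_eq_square)
  qed
  then show ?thesis by (simp add: power2_norm_eq_inner inner_matrix)
qed

lemma norm_diagm_mono:
  assumes "\<And>i. \<bar>a i\<bar> \<le> \<bar>b i\<bar>"
  shows "norm (diagm a) \<le> norm (diagm b)"
proof -
  have "(norm (diagm a))\<^sup>2 \<le> (norm (diagm b))\<^sup>2"
    unfolding norm_diagm_sq by (rule sum_mono) (metis assms abs_le_square_iff)
  then show ?thesis by (rule power2_le_imp_le) simp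
qed

lemma norm_orthogonal_conj:
  fixes V A :: "real^'p^'p"
  assumes "orthogonal_matrix V"
  shows "norm (V ** A ** transpose V) = norm A"
  using assms norm_orthonormal_left[of V "A ** transpose V"] norm_orthonormal_right[of "transpose V" A]
  by (simp add: orthogonal_matrix_def matrix_mul_assoc)

lemma inner_orthogonal_conj_diagm_nonneg:
  assumes "orthogonal_matrix V" "\<And>i. d i \<ge> 0"
  shows "B \<bullet> ((V ** diagm d ** transpose V) ** B) \<ge> 0"
proof -
  define C where "C = transpose V ** B"
  have "B \<bullet> ((V ** diagm d ** transpose V) ** B) = B \<bullet> (V ** (diagm d ** C))"
    by (simp add: C_def matrix_mul_assoc)
  also have "\<dots> = C \<bullet> (diagm d ** C)"
    by (simp add: inner_matrix_mult_left C_def)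
  also have "\<dots> = (\<Sum>i\<in>UNIV. \<Sum>j\<in>UNIV. d i * (C$i$j)\<^sup>2)"
    by (simp add: inner_matrix matrix_mult_diagm_left power2_eq_square mult_ac)
  also have "\<dots> \<ge> 0" using assms(2) by (intro sum_nonneg) simp
  finally show ?thesis .
qed

text \<open>A positive definite matrix has only one positive semidefinite square root:
  with \<open>W = P' V - V S\<close> one gets \<open>\<langle>W, P' W\<rangle> = - \<langle>W, W S\<rangle>\<close>, where the left side is
  nonnegative and the right side is negative unless \<open>W = 0\<close>.\<close>
lemma psd_sqrt_unique:
  fixes V V' :: "real^'p^'p"
  assumes V: "orthogonal_matrix V" and V': "orthogonal_matrix V'"
    and s: "\<And>j. s j > 0" and d': "\<And>j. d' j \<ge> 0"
    and P': "P' = V' ** diagm d' ** transpose V'"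
    and sq: "P' ** P' = V ** diagm (\<lambda>j. (s j)\<^sup>2) ** transpose V"
  shows "P' = V ** diagm s ** transpose V"
proof -
  have VtV: "transpose V ** V = mat 1" and VVt: "V ** transpose V = mat 1"
    using V by (simp_all add: orthogonal_matrix_def)
  define W where "W = P' ** V - V ** diagm s"
  have "P' ** W = P' ** P' ** V - P' ** V ** diagm s" by (simp add: W_def matrix_mult_algebra)
  also have "P' ** P' ** V = V ** diagm s ** diagm s"
    by (simp add: sq VtV diagm_mult power2_eq_square flip: matrix_mul_assoc)
  finally have "W \<bullet> (P' ** W) = - (W \<bullet> (W ** diagm s))"
    by (simp add: W_def matrix_mult_algebra inner_minus_right flip: inner_minus_right)
  moreover have "W \<bullet> (P' ** W) \<ge> 0"
    unfolding P' by (rule inner_orthogonal_conj_diagm_nonneg[OF V' d'])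
  moreover have "W \<bullet> (W ** diagm s) = (\<Sum>i\<in>UNIV. \<Sum>j\<in>UNIV. s j * (W$i$j)\<^sup>2)"
    by (simp add: inner_matrix matrix_mult_diagm_right power2_eq_square mult_ac)
  moreover have "\<dots> \<ge> 0" using s by (intro sum_nonneg) (simp add: less_imp_le)
  ultimately have "(\<Sum>i\<in>UNIV. \<Sum>j\<in>UNIV. s j * (W$i$j)\<^sup>2) = 0" by linarith
  then have "s j * (W$i$j)\<^sup>2 = 0" for i j
    using s by (simp add: sum_nonneg_eq_0_iff sum_nonneg less_imp_le)
  then have "W = 0" using s by (auto simp: vec_eq_iff) (metis less_irrefl power_eq_0_iff)
  then have "P' ** V ** transpose V = V ** diagm s ** transpose V" by (simp add: W_def)
  then show ?thesis by (simp add: VVt flip: matrix_mul_assoc)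
qed

lemma econ_svd_polar_factors:
  fixes X U :: "real^'p^'n" and S V :: "real^'p^'p"
  assumes "econ_svd X U S V"
  shows "transpose (U ** transpose V) ** (U ** transpose V) = mat 1"
    and "X = (U ** transpose V) ** (V ** S ** transpose V)"
    and "transpose X ** X = (V ** S ** transpose V) ** (V ** S ** transpose V)"
proof -
  have U: "transpose U ** U = mat 1" and V: "transpose V ** V = mat 1"
    and VVt: "V ** transpose V = mat 1" and X: "X = U ** S ** transpose V"
    and "transpose S = S"
    using assms diagm_diag[of S] transpose_diagm[of "\<lambda>i. S$i$i"]
    by (auto simp: econ_svd_def matrix_left_right_inverse)
  show "transpose (U ** transpose V) ** (U ** transpose V) = mat 1"
    by (simp add: matrix_transpose_mul matrix_mul_assoc U VVt flip: matrix_mul_assoc[of V])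
  show "X = (U ** transpose V) ** (V ** S ** transpose V)"
  proof -
    have "transpose V ** (V ** Z) = Z" for Z :: "real^'p^'p" by (simp add: matrix_mul_assoc V)
    then show ?thesis by (simp add: X flip: matrix_mul_assoc)
  qed
  show "transpose X ** X = (V ** S ** transpose V) ** (V ** S ** transpose V)"
  proof -
    have "transpose U ** (U ** Z) = Z" "transpose V ** (V ** Z) = Z" for Z :: "real^'p^'p"
      by (simp_all add: matrix_mul_assoc U V)
    then show ?thesis
      by (simp add: X matrix_transpose_mul \<open>transpose S = S\<close> flip: matrix_mul_assoc)
  qed
qed

lemma polar_proj_eq:
  fixes X U :: "real^'p^'n" and S V :: "real^'p^'p"
  assumes svd: "econ_svd X U S V" and pos: "\<And>j. S$j$j > 0"
  shows "polar_proj X = U ** transpose V"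
  unfolding polar_proj_def
proof (rule the_equality)
  show "\<exists>U' S' V'. econ_svd X U' S' V' \<and> U ** transpose V = U' ** transpose V'"
    using svd by blast
next
  define s where "s = (\<lambda>j. S$j$j)"
  define P where "P = V ** S ** transpose V"
  have S: "S = diagm s"
    unfolding s_def by (rule diagm_diag) (use svd in \<open>simp add: econ_svd_def\<close>)
  have V: "orthogonal_matrix V" using svd by (simp add: econ_svd_def orthogonal_matrix)
  have "P ** (V ** diagm (\<lambda>j. 1 / s j) ** transpose V) = mat 1"
  proof -
    have "V ** transpose V = mat 1" "transpose V ** V = mat 1"
      using V by (simp_all add: orthogonal_matrix_def)
    moreover have "s j \<noteq> 0" for j using pos[of j] by (simp add: s_def)
    then have "diagm s ** diagm (\<lambda>j. 1 / s j) = mat 1"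
      by (simp add: diagm_mult flip: diagm_one)
    ultimately show ?thesis
      by (simp add: P_def S matrix_mul_assoc) (simp flip: matrix_mul_assoc)
  qed
  then have P_cancel: "Q ** P ** (V ** diagm (\<lambda>j. 1 / s j) ** transpose V) = Q" for Q :: "real^'p^'n"
    by (simp flip: matrix_mul_assoc)
  fix Q assume "\<exists>U' S' V'. econ_svd X U' S' V' \<and> Q = U' ** transpose V'"
  then obtain U' S' V' where svd': "econ_svd X U' S' V'" and Q: "Q = U' ** transpose V'" by blast
  define P' where "P' = V' ** S' ** transpose V'"
  have "P' ** P' = P ** P"
    using econ_svd_polar_factors(3)[OF svd] econ_svd_polar_factors(3)[OF svd'] by (simp add: P_def P'_def)
  also have "\<dots> = V ** (S ** (transpose V ** V) ** S) ** transpose V"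
    by (simp add: P_def matrix_mul_assoc)
  also have "\<dots> = V ** diagm (\<lambda>j. (s j)\<^sup>2) ** transpose V"
    using V by (simp add: orthogonal_matrix S diagm_mult power2_eq_square)
  finally have sq: "P' ** P' = V ** diagm (\<lambda>j. (s j)\<^sup>2) ** transpose V" .
  define d' where "d' = (\<lambda>j. S'$j$j)"
  have "S' = diagm d'"
    unfolding d'_def by (rule diagm_diag) (use svd' in \<open>simp add: econ_svd_def\<close>)
  have V': "orthogonal_matrix V'" and "\<And>j. d' j \<ge> 0"
    using svd' by (auto simp: econ_svd_def orthogonal_matrix d'_def)
  from \<open>S' = diagm d'\<close> have "P' = V' ** diagm d' ** transpose V'" by (simp add: P'_def)
  moreover have "s j > 0" for j using pos by (simp add: s_def)
  ultimately have "P' = P"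
    using psd_sqrt_unique[OF V V' _ \<open>\<And>j. d' j \<ge> 0\<close> _ sq] by (simp add: P_def S)
  have "Q = X ** (V ** diagm (\<lambda>j. 1 / s j) ** transpose V)"
    using P_cancel[of Q] econ_svd_polar_factors(2)[OF svd'] \<open>P' = P\<close> by (simp add: Q P'_def)
  also have "\<dots> = U ** transpose V"
    using P_cancel[of "U ** transpose V"] econ_svd_polar_factors(2)[OF svd] by (simp add: P_def)
  finally show "Q = U ** transpose V" .
qed

lemma abs_matrix_entry_le_norm: "\<bar>(A::real^'m^'n)$i$j\<bar> \<le> norm A"
  using component_le_norm_cart[of "A$i" j] Finite_Cartesian_Product.norm_nth_le[of A i] by linarith

text \<open>If \<open>X\<^sup>T X = V diag(\<mu>) V\<^sup>T\<close> with \<open>\<mu> > 0\<close>, then \<open>U = X V diag(1/\<surd>\<mu>)\<close> has orthonormal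
  columns and \<open>X = U diag(\<surd>\<mu>) V\<^sup>T\<close> is an economic SVD; \<open>|\<surd>\<mu> - 1| \<le> |\<mu> - 1|\<close> then bounds
  the symmetric polar factor.\<close>
lemma polar_decomposition_near_stiefel:
  fixes X :: "real^'p^'n"
  assumes "norm (transpose X ** X - mat 1) < 1"
  obtains P where "transpose (polar_proj X) ** polar_proj X = mat 1" "X = polar_proj X ** P"
    "norm (P - mat 1) \<le> norm (transpose X ** X - mat 1)"
proof -
  define M where "M = transpose X ** X"
  define E where "E = M - mat 1"
  obtain V \<mu> where V: "orthogonal_matrix V" and eig: "M ** V = V ** diagm \<mu>"
    using spectral_theorem[of M] by (auto simp: M_def matrix_transpose_mul)
  have VtV: "transpose V ** V = mat 1" and VVt: "V ** transpose V = mat 1"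
    using V by (simp_all add: orthogonal_matrix_def)
  have "transpose V ** M ** V = diagm \<mu>"
    by (simp add: eig flip: matrix_mul_assoc) (simp add: matrix_mul_assoc VtV)
  then have "transpose V ** E ** V = diagm (\<lambda>j. \<mu> j - 1)"
    by (simp add: E_def matrix_mult_algebra VtV) (simp add: diagm_diff flip: diagm_one)
  then have E: "norm (diagm (\<lambda>j. \<mu> j - 1)) = norm E"
    using norm_orthogonal_conj[of "transpose V" E] V by simp
  have \<mu>_near_1: "\<bar>\<mu> j - 1\<bar> \<le> norm E" for j
    using abs_matrix_entry_le_norm[of "diagm (\<lambda>j. \<mu> j - 1)" j j] E by (simp add: diagm_def)
  moreover have "norm E < 1" using assms by (simp add: E_def M_def)
  ultimately have "\<mu> j > 0" for j using \<mu>_near_1[of j] by linarith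
  define s where "s j = sqrt (\<mu> j)" for j
  have s_pos: "s j > 0" and s_sq: "s j * s j = \<mu> j" for j
    using \<open>\<mu> j > 0\<close> by (simp_all add: s_def)
  define U where "U = X ** V ** diagm (\<lambda>j. 1 / s j)"
  have "transpose U ** U = diagm (\<lambda>j. 1 / s j) ** (transpose V ** M ** V) ** diagm (\<lambda>j. 1 / s j)"
    by (simp add: U_def M_def matrix_transpose_mul transpose_diagm matrix_mul_assoc)
  also have "\<dots> = mat 1"
    using s_pos s_sq \<open>transpose V ** M ** V = diagm \<mu>\<close> \<open>\<And>j. \<mu> j > 0\<close>
    by (simp add: diagm_mult less_imp_neq[symmetric] flip: diagm_one)
  finally have "transpose U ** U = mat 1" .
  have "U ** diagm s ** transpose V = X ** V ** (diagm (\<lambda>j. 1 / s j) ** diagm s) ** transpose V"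
    by (simp add: U_def matrix_mul_assoc)
  also have "\<dots> = X"
    using s_pos by (simp add: diagm_mult less_imp_neq[symmetric] diagm_one) (simp add: VVt flip: matrix_mul_assoc)
  finally have svd: "econ_svd X U (diagm s) V"
    using \<open>transpose U ** U = mat 1\<close> VtV s_pos by (auto simp: econ_svd_def diagm_nth less_imp_le)
  have Q: "polar_proj X = U ** transpose V"
    by (rule polar_proj_eq[OF svd]) (simp add: diagm_nth s_pos)
  have "V ** diagm (\<lambda>j. s j - 1) ** transpose V = V ** diagm s ** transpose V - mat 1"
    by (simp add: matrix_mult_algebra VVt diagm_one flip: diagm_diff)
  then have "norm (V ** diagm s ** transpose V - mat 1) = norm (diagm (\<lambda>j. s j - 1))"
    using norm_orthogonal_conj[OF V, of "diagm (\<lambda>j. s j - 1)"] by simp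
  also have "\<dots> \<le> norm (diagm (\<lambda>j. \<mu> j - 1))"
  proof (rule norm_diagm_mono)
    fix j
    have "\<mu> j - 1 = (s j - 1) * (s j + 1)" by (simp add: algebra_simps flip: s_sq)
    then have "\<bar>\<mu> j - 1\<bar> = \<bar>s j - 1\<bar> * (s j + 1)"
      using s_pos[of j] by (simp add: abs_mult)
    then show "\<bar>s j - 1\<bar> \<le> \<bar>\<mu> j - 1\<bar>"
      using s_pos[of j] by (simp add: mult_le_cancel_left1)
  qed
  finally have "norm (V ** diagm s ** transpose V - mat 1) \<le> norm (transpose X ** X - mat 1)"
    by (simp add: E E_def M_def)
  moreover have "transpose (polar_proj X) ** polar_proj X = mat 1"
    using econ_svd_polar_factors(1)[OF svd] by (simp add: Q)
  moreover have "X = polar_proj X ** (V ** diagm s ** transpose V)"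
    unfolding Q by (rule econ_svd_polar_factors(2)[OF svd])
  ultimately show ?thesis using that by blast
qed

section \<open>The lower bound\<close>

lemma stiefel_neq_zero:
  assumes "transpose (Y::real^'p^'n) ** Y = mat 1"
  shows "Y \<noteq> 0"
proof
  assume "Y = 0"
  with assms have "(mat 1 :: real^'p^'p) $ i $ i = 0" for i by simp
  then show False by (simp add: mat_def)
qed

lemma inner_rgrad_stiefel_symmetric:
  fixes Y :: "real^'p^'n" and E :: "real^'p^'p"
  assumes "transpose Y ** Y = mat 1" "transpose E = E"
  shows "rgrad f Y \<bullet> (Y ** E) = 0"
proof -
  define B where "B = transpose Y ** egrad f Y"
  have "transpose Y ** rgrad f Y = B - symPart B"
    by (simp add: rgrad_def B_def matrix_mult_algebra assms(1))
  also have "\<dots> = (1/2) *\<^sub>R (B - transpose B)"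
    unfolding symPart_def by (simp add: vec_eq_iff algebra_simps)
  finally have "transpose Y ** rgrad f Y = (1/2) *\<^sub>R (B - transpose B)" .
  moreover have "transpose B \<bullet> E = B \<bullet> E"
    using inner_transpose[of "transpose B" E] assms(2) by simp
  ultimately show ?thesis
    by (simp add: inner_matrix_mult_left inner_diff_left)
qed

lemma sqrt_sum_squares_minus_ge:
  fixes a b r g :: real
  assumes "g \<ge> sqrt (a\<^sup>2 + b\<^sup>2) - r" "r \<le> b / 3"
  shows "g \<ge> a / 2 + b / 4"
proof -
  have "(a/2 + 7*b/12)\<^sup>2 = a\<^sup>2/4 + 7*(a*b)/12 + 49*b\<^sup>2/144"
    by (simp add: power2_eq_square algebra_simps)
  moreover have "2 * (a * b) \<le> a\<^sup>2 + b\<^sup>2"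
    using sum_squares_bound[of a b] by (simp add: mult.assoc)
  ultimately have "(a/2 + 7*b/12)\<^sup>2 \<le> a\<^sup>2 + b\<^sup>2"
    using zero_le_power2[of a] zero_le_power2[of b] by linarith
  then have "a/2 + 7*b/12 \<le> sqrt (a\<^sup>2 + b\<^sup>2)" by (rule real_le_rsqrt)
  then show ?thesis using assms by linarith
qed

lemma norm_egrad_hfun_lower_bound:
  fixes f :: "real^'p^'n \<Rightarrow> real" and X Y :: "real^'p^'n" and P :: "real^'p^'p"
  assumes diff: "\<forall>Y. f differentiable (at Y)"
    and Y: "transpose Y ** Y = mat 1" and XYP: "X = Y ** P"
    and P: "norm (P - mat 1) \<le> norm (transpose X ** X - mat 1)"
    and small: "norm (transpose X ** X - mat 1) \<le> 1/6"
    and lip: "norm (grad_g f X - grad_g f Y) \<le> L * norm (X - Y)" and "0 \<le> L" "6 * L \<le> \<beta>"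
  shows "norm (egrad (hfun f \<beta>) X) \<ge>
           1/2 * norm (rgrad f Y) + \<beta>/4 * norm (transpose X ** X - mat 1)"
proof -
  define E where "E = transpose X ** X - mat 1"
  define R where "R = rgrad f Y"
  define err where "err = (grad_g f X - grad_g f Y) + \<beta> *\<^sub>R ((X - Y) ** E)"
  have "\<beta> \<ge> 0" using \<open>0 \<le> L\<close> \<open>6 * L \<le> \<beta>\<close> by linarith
  have XY: "norm (X - Y) \<le> norm E"
    using norm_orthonormal_left[OF Y, of "P - mat 1"] P
    by (simp add: XYP E_def matrix_mult_algebra)
  have "egrad (hfun f \<beta>) X = (R + \<beta> *\<^sub>R (Y ** E)) + err"
    by (simp add: egrad_hfun[OF diff] err_def R_def grad_g_stiefel[OF Y] E_def
        matrix_mult_algebra algebra_simps)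
  moreover have "norm (R + \<beta> *\<^sub>R (Y ** E)) = sqrt ((norm R)\<^sup>2 + (\<beta> * norm E)\<^sup>2)"
  proof -
    have "R \<bullet> (Y ** E) = 0"
      unfolding R_def
      by (rule inner_rgrad_stiefel_symmetric[OF Y]) (simp add: E_def matrix_mult_algebra)
    then have "(R + \<beta> *\<^sub>R (Y ** E)) \<bullet> (R + \<beta> *\<^sub>R (Y ** E))
        = R \<bullet> R + \<beta>\<^sup>2 * ((Y ** E) \<bullet> (Y ** E))"
      by (simp add: inner_add_left inner_add_right inner_commute power2_eq_square)
    also have "\<dots> = (norm R)\<^sup>2 + (\<beta> * norm E)\<^sup>2"
      using norm_orthonormal_left[OF Y, of E]
      by (simp add: power2_norm_eq_inner[symmetric] power_mult_distrib)
    finally show ?thesis by (simp add: norm_eq_sqrt_inner)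
  qed
  moreover have "norm err \<le> \<beta> * norm E / 3"
  proof -
    have "norm (grad_g f X - grad_g f Y) \<le> \<beta> * norm E / 6"
      using lip mult_mono[OF _ XY, of L "\<beta>/6"] \<open>0 \<le> L\<close> \<open>6 * L \<le> \<beta>\<close> by simp
    moreover have "norm (\<beta> *\<^sub>R ((X - Y) ** E)) \<le> \<beta> * norm E / 6"
    proof -
      have "norm ((X - Y) ** E) \<le> norm E * (1/6)"
        using order_trans[OF norm_matrix_mult_le mult_mono[OF XY small[folded E_def]]] by simp
      from mult_left_mono[OF this \<open>\<beta> \<ge> 0\<close>] show ?thesis using \<open>\<beta> \<ge> 0\<close> by simp
    qed
    ultimately show ?thesis
      using norm_triangle_ineq[of "grad_g f X - grad_g f Y" "\<beta> *\<^sub>R ((X - Y) ** E)"]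
      unfolding err_def by linarith
  qed
  ultimately have "norm (egrad (hfun f \<beta>) X) \<ge> sqrt ((norm R)\<^sup>2 + (\<beta> * norm E)\<^sup>2) - norm err"
    using norm_triangle_ineq4[of "R + \<beta> *\<^sub>R (Y ** E) + err" err] by simp
  from sqrt_sum_squares_minus_ge[OF this] \<open>norm err \<le> _\<close> show ?thesis
    by (simp add: R_def E_def)
qed

theorem mainTheorem17:
  fixes f :: "real^'p^'n \<Rightarrow> real" and \<beta> :: real and X :: "real^'p^'n"
  assumes "CARD('p) \<le> CARD('n)"
    and "\<forall>Y. f differentiable (at Y)"
    and "loc_lipschitz f" and "loc_lipschitz (egrad f)"
    and "\<beta> \<ge> beta_bar f"
    and "X \<in> OmegaBar (1/6)"
  shows "norm (egrad (hfun f \<beta>) X) \<ge>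
           1/2 * norm (rgrad f (polar_proj X)) + \<beta>/4 * norm (transpose X ** X - mat 1)"
proof -
  note diff = assms(2) and lip = assms(4)
  have small: "norm (transpose X ** X - mat 1) \<le> 1/6"
    using assms(6) by (simp add: OmegaBar_def)
  then obtain P where Y: "transpose (polar_proj X) ** polar_proj X = mat 1"
    and XYP: "X = polar_proj X ** P" and P: "norm (P - mat 1) \<le> norm (transpose X ** X - mat 1)"
    using polar_decomposition_near_stiefel[of X] by force
  have "polar_proj X \<in> OmegaSet" "X \<in> OmegaSet"
    using Y assms(6) OmegaBar_subset_OmegaSet[of 0] OmegaBar_subset_OmegaSet[of "1/6"]
    by (auto simp: OmegaBar_def)
  moreover have "polar_proj X \<noteq> 0" using Y by (rule stiefel_neq_zero)
  ultimately have "norm (grad_g f X - grad_g f (polar_proj X)) \<le> M2 f * norm (X - polar_proj X)"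
    and "0 \<le> M2 f"
    using norm_grad_g_diff_le_M2[OF diff lip] M2_nonneg[OF diff lip] by blast+
  moreover have "6 * M2 f \<le> \<beta>" using assms(5) by (simp add: beta_bar_def)
  ultimately show ?thesis
    by (rule norm_egrad_hfun_lower_bound[OF diff Y XYP P small])
qed

end
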